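(* Let $\bm{X}$ be a centered $d$-dimensional random vector such that $|\bm{X}|\le M$ almost surely, for some $M>0$. Then, for any positive integers $n$ and $N$ with $N\ge 6dn$, if $\bm{X}_1,\dots,\bm{X}_N$ are i.i.d. copies of $\bm{X}$, \[ \mathbb{P}\!\left(\operatorname{dist}\!\left(\bm{0},\operatorname{conv}\{\bm{X}_1,\dots,\bm{X}_N\}\right)\le \frac{2M}{n}\right) > 1-2^{-d}. \]
   Context: $|\cdot|$ denotes the Euclidean norm on $\mathbb{R}^d$. For $A\subset\mathbb{R}^d$, $\operatorname{conv}A$ denotes the convex hull of $A$ (the set of all finite convex combinations of points of $A$), and $\operatorname{dist}(\bm\theta,\operatorname{conv}A):=\inf_{\bm a\in\operatorname{conv}A}|\bm\theta-\bm a|$. *)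

theory Defs
  imports "HOL-Probability.Probability"
begin

end

theory Submission
  imports Defs
begin

(* Let F be the event that the origin is at distance more than r = 2M/n from the convex hull
   of X_1, ..., X_N.  Since <u, X> is centred and bounded below by -M, Markov's inequality gives
   P(<u, X> > r) <= M/(M + r) = n/(n + 2) for every unit vector u.
   If deleting the points indexed by K does not change the distance, the nearest point p of the
   hull of the remaining points is also nearest for the full hull, so every X_k with k in K lies
   in the halfspace {y. |p| <= <p/|p|, y>}, and |p| > r on F.  As p is determined by the other
   points, independence bounds the probability of this by (n/(n + 2))^|K|.  By Caratheodory, on F
   the distance is already attained by at most d + 1 of the points, so every outcome of F lies in
   at least C(N - d - 1, m) of these events with |K| = m.  Double counting with m = 3dn gives
   P(F) <= C(N, m) / C(N - d - 1, m) * (n/(n + 2))^m <= 3^(d+1) / 27^d < 2^(-d). *)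

(* infdist to the empty set is 0, whence the nonemptiness hypotheses below. *)
definition hull_dist :: "'i set \<Rightarrow> ('i \<Rightarrow> 'd::euclidean_space) \<Rightarrow> real" where
  "hull_dist J x = infdist 0 (convex hull (x ` J))"

lemma hull_dist_cong:
  assumes "\<And>j. j \<in> J \<Longrightarrow> x j = y j"
  shows "hull_dist J x = hull_dist J y"
  unfolding hull_dist_def using assms by (metis image_cong)

lemma hull_dist_le_norm:
  assumes "p \<in> convex hull (x ` J)"
  shows "hull_dist J x \<le> norm p"
  using infdist_le[OF assms, of 0] by (simp add: hull_dist_def)

lemma closest_point_hull:
  fixes x :: "'i \<Rightarrow> 'd::euclidean_space"
  assumes "finite J" "J \<noteq> {}"
  shows closest_point_hull_in: "closest_point (convex hull (x ` J)) 0 \<in> convex hull (x ` J)"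
    and norm_closest_point_hull: "norm (closest_point (convex hull (x ` J)) 0) = hull_dist J x"
proof -
  let ?C = "convex hull (x ` J)"
  have "closed ?C" "?C \<noteq> {}"
    using assms by (auto intro: compact_imp_closed compact_convex_hull finite_imp_compact)
  then show in_hull: "closest_point ?C 0 \<in> ?C"
    by (rule closest_point_in_set)
  obtain q where "q \<in> ?C" "infdist 0 ?C = dist 0 q"
    using infdist_attains_inf[OF \<open>closed ?C\<close> \<open>?C \<noteq> {}\<close>] .
  then show "norm (closest_point ?C 0) = hull_dist J x"
    using closest_point_le[OF \<open>closed ?C\<close>, of q 0] hull_dist_le_norm[OF in_hull]
    by (simp add: hull_dist_def)
qed

lemma hull_dist_antimono:
  assumes "J \<subseteq> I" "J \<noteq> {}"
  shows "hull_dist I x \<le> hull_dist J x"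
  unfolding hull_dist_def using assms by (intro infdist_mono hull_mono) auto

lemma hull_dist_le_add_sum_dist:
  fixes x y :: "'i \<Rightarrow> 'd::euclidean_space"
  assumes "finite I"
  shows "hull_dist I x \<le> hull_dist I y + (\<Sum>i\<in>I. dist (x i) (y i))"
proof (cases "I = {}")
  case True
  then show ?thesis by (simp add: hull_dist_def)
next
  case False
  define s where "s = (\<Sum>i\<in>I. dist (x i) (y i))"
  define W where "W = (\<Union>a\<in>convex hull (x ` I). \<Union>b\<in>cball 0 s. {a + b})"
  have "y ` I \<subseteq> W"
  proof
    fix z assume "z \<in> y ` I"
    then obtain i where i: "i \<in> I" "z = y i" by auto
    have "norm (y i - x i) \<le> s"
      unfolding s_def dist_norm[symmetric] dist_commute[of "y i"]
      using assms i(1) by (intro member_le_sum) auto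
    then have "y i - x i \<in> cball 0 s" by simp
    moreover have "x i \<in> convex hull (x ` I)" using i(1) by (simp add: hull_inc)
    ultimately show "z \<in> W"
      unfolding W_def using i(2) by (intro UN_I[of "x i"] UN_I[of "y i - x i"]) auto
  qed
  moreover have "convex W"
    unfolding W_def by (intro convex_sums convex_convex_hull convex_cball)
  ultimately have hull_sub: "convex hull (y ` I) \<subseteq> W"
    by (rule hull_minimal)
  define p where "p = closest_point (convex hull (y ` I)) 0"
  have "p \<in> W" using hull_sub closest_point_hull_in[OF assms False] by (auto simp: p_def)
  then obtain a b where ab: "p = a + b" "a \<in> convex hull (x ` I)" "norm b \<le> s"
    unfolding W_def by auto
  have "hull_dist I x \<le> norm a" by (rule hull_dist_le_norm[OF ab(2)])
  also have "\<dots> \<le> norm p + norm b" using norm_triangle_ineq4[of p b] by (simp add: ab(1))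
  also have "norm p = hull_dist I y"
    unfolding p_def by (rule norm_closest_point_hull[OF assms False])
  finally show ?thesis using ab(3) by (simp add: s_def)
qed

lemma continuous_on_hull_dist:
  fixes I :: "'i set"
  assumes "finite I"
  shows "continuous_on UNIV (hull_dist I :: ('i \<Rightarrow> 'd::euclidean_space) \<Rightarrow> real)"
  unfolding continuous_on_def
proof (intro ballI)
  fix y :: "'i \<Rightarrow> 'd"
  let ?g = "\<lambda>x. \<Sum>i\<in>I. dist (x i) (y i)"
  have "continuous_on UNIV ?g"
    by (intro continuous_intros continuous_on_product_coordinates)
  then have "(?g \<longlongrightarrow> ?g y) (at y)"
    unfolding continuous_on_def by blast
  then have g0: "(?g \<longlongrightarrow> 0) (at y)" by simp
  have bound: "norm (dist (hull_dist I x) (hull_dist I y)) \<le> ?g x" for x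
    using hull_dist_le_add_sum_dist[OF assms, of x y] hull_dist_le_add_sum_dist[OF assms, of y x]
    by (simp add: dist_real_def dist_commute)
  have "((\<lambda>x. dist (hull_dist I x) (hull_dist I y)) \<longlongrightarrow> 0) (at y)"
    using always_eventually[OF allI[OF bound]] g0 by (rule Lim_null_comparison)
  then show "(hull_dist I \<longlongrightarrow> hull_dist I y) (at y within UNIV)"
    by (rule tendsto_dist_iff[THEN iffD2])
qed

lemma measurable_hull_dist:
  fixes I J :: "'i::countable set"
  assumes "finite J"
  shows "(hull_dist J :: ('i \<Rightarrow> 'd::euclidean_space) \<Rightarrow> real) \<in> borel_measurable (Pi\<^sub>M I (\<lambda>_. borel))"
proof -
  have "(\<lambda>x. x i) \<in> borel_measurable (Pi\<^sub>M I (\<lambda>_. borel :: 'd measure))" for i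
  proof (cases "i \<in> I")
    case True
    then show ?thesis by measurable
  next
    case False
    then have "x i = undefined" if "x \<in> space (Pi\<^sub>M I (\<lambda>_. borel :: 'd measure))" for x
      using that by (auto simp: space_PiM PiE_def extensional_def)
    then show ?thesis
      by (subst measurable_cong[where g = "\<lambda>_. undefined"]) (auto intro: measurable_const)
  qed
  (* For countable 'i the Borel sets of the product topology are the product sigma-algebra. *)
  then have "(\<lambda>x. x) \<in> borel_measurable (Pi\<^sub>M I (\<lambda>_. borel :: 'd measure))"
    by (rule measurable_coordinatewise_then_product)
  then show ?thesis
    using borel_measurable_continuous_onI[OF continuous_on_hull_dist[OF assms]]
    by (rule measurable_compose)
qed

lemma norm_le_sgn_inner:
  fixes p y :: "'a::real_inner"
  assumes "p \<bullet> p \<le> p \<bullet> y"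
  shows "norm p \<le> sgn p \<bullet> y"
proof (cases "p = 0")
  case False
  then have "sgn p \<bullet> y = (p \<bullet> y) / norm p"
    by (simp add: sgn_div_norm divide_inverse_commute)
  moreover have "norm p * norm p \<le> p \<bullet> y"
    using assms by (simp add: norm_eq_sqrt_inner)
  ultimately show ?thesis using False by (simp add: pos_le_divide_eq)
qed simp

lemma hull_dist_unchanged_imp_halfspace:
  fixes x :: "'i \<Rightarrow> 'd::euclidean_space"
  assumes "finite I" "J \<subseteq> I" "J \<noteq> {}" "hull_dist J x \<le> hull_dist I x" "i \<in> I"
  shows "hull_dist J x \<le> sgn (closest_point (convex hull (x ` J)) 0) \<bullet> x i"
proof -
  let ?C = "convex hull (x ` I)"
  define p where "p = closest_point (convex hull (x ` J)) 0"
  have "finite J" using assms(1,2) by (rule finite_subset[rotated])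
  then have p: "p \<in> convex hull (x ` J)" "norm p = hull_dist J x"
    unfolding p_def using assms(3) by (rule closest_point_hull)+
  have "closed ?C"
    using assms(1) by (intro compact_imp_closed compact_convex_hull finite_imp_compact) auto
  moreover have "p \<in> ?C" using p(1) hull_mono[of "x ` J" "x ` I"] assms(2) by auto
  moreover have "dist 0 p \<le> dist 0 z" if "z \<in> ?C" for z
    using p(2) assms(4) hull_dist_le_norm[OF that] by simp
  moreover have "x i \<in> ?C" using assms(5) by (simp add: hull_inc)
  ultimately have "(0 - p) \<bullet> (x i - p) \<le> 0"
    using any_closest_point_dot[of ?C p "x i" 0] by (auto simp: convex_convex_hull)
  then have "p \<bullet> p \<le> p \<bullet> x i"
    by (simp add: inner_diff_right)
  then have "norm p \<le> sgn p \<bullet> x i"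
    by (rule norm_le_sgn_inner)
  then show ?thesis
    using p(2) by (simp add: p_def)
qed

lemma caratheodory_hull_dist:
  fixes x :: "'i \<Rightarrow> 'd::euclidean_space"
  assumes "finite I" "I \<noteq> {}"
  obtains T where "T \<subseteq> I" "T \<noteq> {}" "card T \<le> DIM('d) + 1" "hull_dist T x \<le> hull_dist I x"
proof -
  define p where "p = closest_point (convex hull (x ` I)) 0"
  have p: "p \<in> convex hull (x ` I)" "norm p = hull_dist I x"
    unfolding p_def using assms by (rule closest_point_hull)+
  then obtain S where S: "finite S" "S \<subseteq> x ` I" "card S \<le> DIM('d) + 1" "p \<in> convex hull S"
    using caratheodory[of "x ` I"] by blast
  then obtain T where T: "T \<subseteq> I" "S = x ` T" "card T = card S"
    by (metis card_image subset_image_inj)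
  have "hull_dist T x \<le> hull_dist I x"
    using hull_dist_le_norm[of p x T] S(4) T(2) p(2) by simp
  moreover have "T \<noteq> {}" using S(4) T(2) by auto
  ultimately show ?thesis using that T S(3) by auto
qed

lemma (in prob_space) prob_greater_le_of_mean_zero:
  fixes Z :: "'a \<Rightarrow> real"
  assumes Z: "integrable M Z" "expectation Z = 0"
    and lower: "AE \<omega> in M. - b \<le> Z \<omega>" and "0 \<le> b" "0 < r"
  shows "prob {\<omega> \<in> space M. r < Z \<omega>} \<le> b / (b + r)"
proof -
  have [measurable]: "Z \<in> borel_measurable M" using Z(1) by auto
  have "prob {\<omega> \<in> space M. r < Z \<omega>} \<le> prob {\<omega> \<in> space M. r + b \<le> Z \<omega> + b}"
    by (rule finite_measure_mono) auto
  also have "\<dots> \<le> (\<integral>\<omega>. Z \<omega> + b \<partial>M) / (r + b)"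
    using lower assms(4,5) by (intro integral_Markov_inequality_measure[where A = "space M"]) (auto simp: Z)
  also have "(\<integral>\<omega>. Z \<omega> + b \<partial>M) = b"
    using Z by (simp add: prob_space)
  finally show ?thesis by (simp add: add.commute)
qed

lemma (in prob_space) prob_halfspace_le:
  fixes X :: "'a \<Rightarrow> 'd::euclidean_space"
  assumes X: "X \<in> borel_measurable M" "integrable M X" "expectation X = 0"
    and bounded: "AE \<omega> in M. norm (X \<omega>) \<le> b" and "0 \<le> b" "0 < r" "norm u = 1"
  shows "measure (distr M borel X) {y. r < u \<bullet> y} \<le> b / (b + r)"
proof -
  have "measure (distr M borel X) {y. r < u \<bullet> y} = prob {\<omega> \<in> space M. r < u \<bullet> X \<omega>}"
    using X(1) by (subst measure_distr) (auto intro: arg_cong[where f = prob])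
  also have "\<dots> \<le> b / (b + r)"
  proof (rule prob_greater_le_of_mean_zero)
    show "integrable M (\<lambda>\<omega>. u \<bullet> X \<omega>)" "expectation (\<lambda>\<omega>. u \<bullet> X \<omega>) = 0"
      using X by simp_all
    show "AE \<omega> in M. - b \<le> u \<bullet> X \<omega>"
      using bounded
    proof eventually_elim
      case (elim \<omega>)
      then show ?case
        using Cauchy_Schwarz_ineq2[of u "X \<omega>"] \<open>norm u = 1\<close> by auto
    qed
    show "0 \<le> b" "0 < r" by fact+
  qed
  finally show ?thesis .
qed

lemma measure_PiM_le_of_sections:
  fixes M :: "'i \<Rightarrow> 'a measure"
  assumes M: "\<And>i. prob_space (M i)"
    and JK: "J \<inter> K = {}" "finite J" "finite K"
    and E: "E \<in> sets (Pi\<^sub>M (J \<union> K) M)"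
    and section_bound: "\<And>a. a \<in> space (Pi\<^sub>M J M) \<Longrightarrow>
      measure (Pi\<^sub>M K M) {b \<in> space (Pi\<^sub>M K M). merge J K (a, b) \<in> E} \<le> c"
  shows "measure (Pi\<^sub>M (J \<union> K) M) E \<le> c"
proof -
  interpret product_sigma_finite M
    unfolding product_sigma_finite_def using M by (simp add: prob_space_imp_sigma_finite)
  interpret PJ: prob_space "Pi\<^sub>M J M" by (rule prob_space_PiM) (use M in auto)
  interpret PK: prob_space "Pi\<^sub>M K M" by (rule prob_space_PiM) (use M in auto)
  interpret PJK: prob_space "Pi\<^sub>M (J \<union> K) M" by (rule prob_space_PiM) (use M in auto)
  let ?PP = "Pi\<^sub>M J M \<Otimes>\<^sub>M Pi\<^sub>M K M"
  have merge: "merge J K \<in> measurable ?PP (Pi\<^sub>M (J \<union> K) M)"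
    by (rule measurable_merge)
  define A where "A = merge J K -` E \<inter> space ?PP"
  have A: "A \<in> sets ?PP" unfolding A_def using merge E by (rule measurable_sets)
  obtain a where "a \<in> space (Pi\<^sub>M J M)" using PJ.not_empty by blast
  then have "0 \<le> c" using section_bound[of a] measure_nonneg order_trans by blast
  have "emeasure (Pi\<^sub>M (J \<union> K) M) E = emeasure (distr ?PP (Pi\<^sub>M (J \<union> K) M) (merge J K)) E"
    by (simp only: distr_merge[OF JK])
  also have "\<dots> = emeasure ?PP A"
    unfolding A_def using merge E by (rule emeasure_distr)
  also have "\<dots> = (\<integral>\<^sup>+a. emeasure (Pi\<^sub>M K M) (Pair a -` A) \<partial>Pi\<^sub>M J M)"
    by (rule PK.emeasure_pair_measure_alt[OF A])
  also have "\<dots> \<le> (\<integral>\<^sup>+a. ennreal c \<partial>Pi\<^sub>M J M)"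
  proof (rule nn_integral_mono)
    fix a assume a: "a \<in> space (Pi\<^sub>M J M)"
    then have "Pair a -` A = {b \<in> space (Pi\<^sub>M K M). merge J K (a, b) \<in> E}"
      by (auto simp: A_def space_pair_measure)
    then show "emeasure (Pi\<^sub>M K M) (Pair a -` A) \<le> ennreal c"
      using section_bound[OF a] by (simp add: PK.emeasure_eq_measure ennreal_leI)
  qed
  also have "\<dots> = ennreal c" by (simp add: PJ.emeasure_space_1)
  finally show ?thesis
    using \<open>0 \<le> c\<close> by (simp add: PJK.emeasure_eq_measure)
qed

lemma measurable_PiM_hull_dist:
  fixes \<mu> :: "'d::euclidean_space measure" and I J :: "'i::countable set"
  assumes "sets \<mu> = sets borel" "finite J"
  shows "hull_dist J \<in> borel_measurable (Pi\<^sub>M I (\<lambda>_. \<mu>))"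
proof -
  have "sets (Pi\<^sub>M I (\<lambda>_. \<mu>)) = sets (Pi\<^sub>M I (\<lambda>_. borel))"
    using assms(1) by (intro sets_PiM_cong) auto
  then show ?thesis
    using measurable_hull_dist[OF assms(2), of I] measurable_cong_sets[OF _ refl] by blast
qed

lemma (in prob_space) measure_PiM_le_power_of_subset_PiE:
  assumes "finite K" "H \<in> sets M" "measure M H \<le> c" "S \<subseteq> Pi\<^sub>E K (\<lambda>_. H)"
  shows "measure (Pi\<^sub>M K (\<lambda>_. M)) S \<le> c ^ card K"
proof -
  interpret product_sigma_finite "\<lambda>_. M"
    by (simp add: product_sigma_finite_def prob_space_imp_sigma_finite prob_space_axioms)
  interpret PK: prob_space "Pi\<^sub>M K (\<lambda>_. M)"
    by (rule prob_space_PiM) (rule prob_space_axioms)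
  have "measure (Pi\<^sub>M K (\<lambda>_. M)) S \<le> measure (Pi\<^sub>M K (\<lambda>_. M)) (Pi\<^sub>E K (\<lambda>_. H))"
    using assms(1,2,4) by (intro PK.finite_measure_mono sets_PiM_I_finite) auto
  also have "emeasure (Pi\<^sub>M K (\<lambda>_. M)) (Pi\<^sub>E K (\<lambda>_. H)) = ennreal (measure M H ^ card K)"
    using assms(1,2) by (simp add: emeasure_PiM emeasure_eq_measure ennreal_power)
  then have "measure (Pi\<^sub>M K (\<lambda>_. M)) (Pi\<^sub>E K (\<lambda>_. H)) = measure M H ^ card K"
    by (simp add: PK.emeasure_eq_measure)
  also have "\<dots> \<le> c ^ card K"
    using assms(3) by (intro power_mono) auto
  finally show ?thesis .
qed

lemma sets_PiM_hull_dist_unchanged: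
  fixes \<mu> :: "'d::euclidean_space measure" and I J :: "'i::countable set"
  assumes "sets \<mu> = sets borel" "finite I" "finite J"
  shows "{x \<in> space (Pi\<^sub>M I (\<lambda>_. \<mu>)). r < hull_dist I x \<and> hull_dist J x \<le> hull_dist I x}
    \<in> sets (Pi\<^sub>M I (\<lambda>_. \<mu>))"
proof -
  have hull_I: "hull_dist I \<in> borel_measurable (Pi\<^sub>M I (\<lambda>_. \<mu>))"
    and hull_J: "hull_dist J \<in> borel_measurable (Pi\<^sub>M I (\<lambda>_. \<mu>))"
    using measurable_PiM_hull_dist[OF assms(1)] assms(2,3) by blast+
  have "{x \<in> space (Pi\<^sub>M I (\<lambda>_. \<mu>)). r < hull_dist I x \<and> hull_dist J x \<le> hull_dist I x}
    = {x \<in> space (Pi\<^sub>M I (\<lambda>_. \<mu>)). r < hull_dist I x}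
      \<inter> {x \<in> space (Pi\<^sub>M I (\<lambda>_. \<mu>)). hull_dist J x \<le> hull_dist I x}"
    by auto
  then show ?thesis
    using borel_measurable_less[OF borel_measurable_const hull_I] borel_measurable_le[OF hull_J hull_I]
    by simp
qed

lemma merge_hull_dist_unchanged_imp_halfspace:
  fixes a b :: "'i \<Rightarrow> 'd::euclidean_space"
  assumes "finite (J \<union> K)" "J \<inter> K = {}" "J \<noteq> {}"
    and far: "r < hull_dist (J \<union> K) (merge J K (a, b))"
    and unchanged: "hull_dist J (merge J K (a, b)) \<le> hull_dist (J \<union> K) (merge J K (a, b))"
  shows "r < hull_dist J a"
    and "k \<in> K \<Longrightarrow> r < sgn (closest_point (convex hull (a ` J)) 0) \<bullet> b k"
proof -
  let ?x = "merge J K (a, b)"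
  have image_J: "?x ` J = a ` J"
    by (rule image_cong) (simp_all add: merge_def)
  have "hull_dist (J \<union> K) ?x \<le> hull_dist J ?x"
    using assms(3) by (intro hull_dist_antimono) auto
  with far have "r < hull_dist J ?x" by simp
  then show "r < hull_dist J a"
    by (simp add: hull_dist_def image_J)
  assume "k \<in> K"
  then have "k \<in> J \<union> K" "?x k = b k" using assms(2) by (auto simp: merge_def)
  with \<open>r < hull_dist J ?x\<close> show "r < sgn (closest_point (convex hull (a ` J)) 0) \<bullet> b k"
    using hull_dist_unchanged_imp_halfspace[OF assms(1) _ assms(3) unchanged, of k]
    by (simp add: image_J)
qed

lemma measure_far_hull_dist_unchanged_le:
  fixes \<mu> :: "'d::euclidean_space measure" and I :: "'i::countable set"
  assumes \<mu>: "prob_space \<mu>" "sets \<mu> = sets borel"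
    and halfspace: "\<And>u. norm u = 1 \<Longrightarrow> measure \<mu> {y. r < u \<bullet> y} \<le> c"
    and "0 < r" "finite I" "K \<subseteq> I" "K \<noteq> I"
  shows "measure (Pi\<^sub>M I (\<lambda>_. \<mu>))
      {x \<in> space (Pi\<^sub>M I (\<lambda>_. \<mu>)). r < hull_dist I x \<and> hull_dist (I - K) x \<le> hull_dist I x}
    \<le> c ^ card K"
proof -
  interpret \<mu>: prob_space \<mu> by (rule \<mu>(1))
  define J where "J = I - K"
  have JK: "J \<inter> K = {}" "J \<union> K = I" "finite J" "finite K" "J \<noteq> {}"
    using assms(5-7) by (auto simp: J_def intro: finite_subset)
  obtain e :: 'd where "e \<in> Basis" using nonempty_Basis by blast
  then have "0 \<le> c"
    using measure_nonneg halfspace[of e] by (rule_tac order_trans) auto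
  let ?E = "{x \<in> space (Pi\<^sub>M I (\<lambda>_. \<mu>)). r < hull_dist I x \<and> hull_dist J x \<le> hull_dist I x}"
  have "measure (Pi\<^sub>M (J \<union> K) (\<lambda>_. \<mu>)) ?E \<le> c ^ card K"
  proof (rule measure_PiM_le_of_sections[OF \<mu>(1) JK(1,3,4)])
    show "?E \<in> sets (Pi\<^sub>M (J \<union> K) (\<lambda>_. \<mu>))"
      unfolding JK(2) using \<mu>(2) assms(5) JK(3) by (rule sets_PiM_hull_dist_unchanged)
  next
    fix a assume "a \<in> space (Pi\<^sub>M J (\<lambda>_. \<mu>))"
    let ?S = "{b \<in> space (Pi\<^sub>M K (\<lambda>_. \<mu>)). merge J K (a, b) \<in> ?E}"
    define u where "u = sgn (closest_point (convex hull (a ` J)) 0)"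
    let ?H = "{y. r < u \<bullet> y}"
    have far: "r < hull_dist J a" and in_H: "b \<in> Pi\<^sub>E K (\<lambda>_. ?H)" if "b \<in> ?S" for b
    proof -
      have "r < hull_dist (J \<union> K) (merge J K (a, b))"
        and "hull_dist J (merge J K (a, b)) \<le> hull_dist (J \<union> K) (merge J K (a, b))"
        using that by (simp_all add: JK(2))
      note halfspace_merge = merge_hull_dist_unchanged_imp_halfspace[OF _ JK(1,5) this]
      show "r < hull_dist J a"
        using halfspace_merge(1) assms(5) JK(2) by simp
      show "b \<in> Pi\<^sub>E K (\<lambda>_. ?H)"
        using halfspace_merge(2) assms(5) JK(2) that by (auto simp: u_def space_PiM)
    qed
    show "measure (Pi\<^sub>M K (\<lambda>_. \<mu>)) ?S \<le> c ^ card K"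
    proof (cases "?S = {}")
      case True
      then show ?thesis using \<open>0 \<le> c\<close> by (simp only:) simp
    next
      case False
      then have "r < hull_dist J a" using far by blast
      then have "norm u = 1"
        using closest_point_hull[OF JK(3,5), of a] \<open>0 < r\<close> by (auto simp: u_def norm_sgn)
      moreover have "?H \<in> sets \<mu>" unfolding \<mu>(2) by measurable
      ultimately show ?thesis
        using halfspace JK(4) in_H by (intro \<mu>.measure_PiM_le_power_of_subset_PiE) auto
    qed
  qed
  then show ?thesis
    unfolding JK(2) unfolding J_def .
qed

lemma (in finite_measure) mult_measure_le_sum_measure_of_cover:
  assumes "finite \<K>" "\<And>K. K \<in> \<K> \<Longrightarrow> E K \<in> sets M" "F \<in> sets M"
    and cover: "\<And>x. x \<in> F \<Longrightarrow> k \<le> card {K \<in> \<K>. x \<in> E K}"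
  shows "real k * measure M F \<le> (\<Sum>K\<in>\<K>. measure M (E K))"
proof -
  have "real k * indicator F x \<le> (\<Sum>K\<in>\<K>. indicator (E K) x)" for x
  proof (cases "x \<in> F")
    case True
    have "(\<Sum>K\<in>\<K>. indicator (E K) x) = (\<Sum>K\<in>{K \<in> \<K>. x \<in> E K}. 1 :: real)"
      unfolding sum.inter_filter[OF assms(1)] by (simp add: indicator_def of_bool_def)
    then show ?thesis using cover[OF True] True by simp
  next
    case False
    then show ?thesis by (simp add: sum_nonneg)
  qed
  then have "(\<integral>x. real k * indicator F x \<partial>M) \<le> (\<integral>x. (\<Sum>K\<in>\<K>. indicator (E K) x) \<partial>M)"
    using assms(1-3)
    by (intro integral_mono integrable_sum integrable_mult_right integrable_real_indicator)
      (auto simp: emeasure_eq_measure)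
  then show ?thesis
    using assms(1-3) by (simp add: emeasure_eq_measure)
qed

lemma binomial_le_card_hull_dist_unchanged:
  fixes x :: "'i \<Rightarrow> 'd::euclidean_space"
  assumes "finite I" "I \<noteq> {}"
  shows "(card I - (DIM('d) + 1)) choose m
    \<le> card {K. K \<subseteq> I \<and> card K = m \<and> hull_dist (I - K) x \<le> hull_dist I x}"
proof -
  obtain T where T: "T \<subseteq> I" "T \<noteq> {}" "card T \<le> DIM('d) + 1" "hull_dist T x \<le> hull_dist I x"
    using caratheodory_hull_dist[OF assms] by blast
  have "card I - (DIM('d) + 1) \<le> card (I - T)"
    using T(1,3) assms(1) by (simp add: card_Diff_subset finite_subset)
  then have "(card I - (DIM('d) + 1)) choose m \<le> card (I - T) choose m"
    by (rule binomial_right_mono)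
  also have "\<dots> = card {K. K \<subseteq> I - T \<and> card K = m}"
    using assms(1) by (simp add: n_subsets)
  also have "\<dots> \<le> card {K. K \<subseteq> I \<and> card K = m \<and> hull_dist (I - K) x \<le> hull_dist I x}"
  proof (rule card_mono)
    show "finite {K. K \<subseteq> I \<and> card K = m \<and> hull_dist (I - K) x \<le> hull_dist I x}"
      using finite_Collect_subsets[OF assms(1)] by (rule rev_finite_subset) blast
  next
    show "{K. K \<subseteq> I - T \<and> card K = m}
        \<subseteq> {K. K \<subseteq> I \<and> card K = m \<and> hull_dist (I - K) x \<le> hull_dist I x}"
    proof (rule subsetI, intro CollectI conjI)
      fix K assume K: "K \<in> {K. K \<subseteq> I - T \<and> card K = m}"
      then show "K \<subseteq> I" "card K = m" by auto
      have "hull_dist (I - K) x \<le> hull_dist T x"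
        using K T(1,2) by (intro hull_dist_antimono) auto
      then show "hull_dist (I - K) x \<le> hull_dist I x"
        using T(4) by linarith
    qed
  qed
  finally show ?thesis .
qed

lemma binomial_mult_measure_far_hull_le:
  fixes \<mu> :: "'d::euclidean_space measure" and I :: "'i::countable set"
  assumes \<mu>: "prob_space \<mu>" "sets \<mu> = sets borel"
    and halfspace: "\<And>u. norm u = 1 \<Longrightarrow> measure \<mu> {y. r < u \<bullet> y} \<le> c"
    and "0 < r" "finite I" "m < card I"
  shows "real ((card I - (DIM('d) + 1)) choose m)
      * measure (Pi\<^sub>M I (\<lambda>_. \<mu>)) {x \<in> space (Pi\<^sub>M I (\<lambda>_. \<mu>)). r < hull_dist I x}
    \<le> real (card I choose m) * c ^ m"
proof -
  let ?Q = "Pi\<^sub>M I (\<lambda>_. \<mu>)"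
  interpret Q: prob_space ?Q by (rule prob_space_PiM) (rule \<mu>(1))
  define \<K> where "\<K> = {K. K \<subseteq> I \<and> card K = m}"
  define E where "E K = {x \<in> space ?Q. r < hull_dist I x \<and> hull_dist (I - K) x \<le> hull_dist I x}" for K
  define F where "F = {x \<in> space ?Q. r < hull_dist I x}"
  have "I \<noteq> {}" using assms(6) by auto
  have \<K>: "finite \<K>" "card \<K> = card I choose m"
    using assms(5) by (simp_all add: \<K>_def n_subsets)
  have "F \<in> sets ?Q"
    using borel_measurable_less[OF borel_measurable_const measurable_PiM_hull_dist[OF \<mu>(2) assms(5)]]
    by (simp add: F_def)
  moreover have "E K \<in> sets ?Q" for K
    unfolding E_def using \<mu>(2) assms(5) by (rule sets_PiM_hull_dist_unchanged) (use assms(5) in simp)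
  moreover have "(card I - (DIM('d) + 1)) choose m \<le> card {K \<in> \<K>. x \<in> E K}" if "x \<in> F" for x
    using binomial_le_card_hull_dist_unchanged[OF assms(5) \<open>I \<noteq> {}\<close>, where x = x and m = m] that
    by (auto simp: \<K>_def E_def F_def conj_commute)
  ultimately have "real ((card I - (DIM('d) + 1)) choose m) * measure ?Q F \<le> (\<Sum>K\<in>\<K>. measure ?Q (E K))"
    using \<K>(1) by (intro Q.mult_measure_le_sum_measure_of_cover)
  also have "\<dots> \<le> (\<Sum>K\<in>\<K>. c ^ m)"
  proof (rule sum_mono)
    fix K assume "K \<in> \<K>"
    then show "measure ?Q (E K) \<le> c ^ m"
      unfolding E_def using measure_far_hull_dist_unchanged_le[OF \<mu> halfspace \<open>0 < r\<close> assms(5)] assms(6)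
      by (auto simp: \<K>_def)
  qed
  finally show ?thesis using \<K>(2) by (simp add: F_def)
qed

lemma binomial_le_three_mult_pred:
  assumes "3 * m \<le> 2 * a" "0 < a"
  shows "a choose m \<le> 3 * ((a - 1) choose m)"
proof -
  have "a * (a choose m) \<le> 3 * ((a - m) * (a choose m))"
    using assms by simp
  also have "(a - m) * (a choose m) = a * ((a - 1) choose m)"
    by (rule binomial_absorb_comp)
  finally show ?thesis using assms(2) by simp
qed

lemma binomial_le_three_pow_mult:
  "3 * m + 2 * t \<le> 2 * N + 2 \<Longrightarrow> t \<le> N \<Longrightarrow> N choose m \<le> 3 ^ t * ((N - t) choose m)"
proof (induction t)
  case (Suc t)
  have "N choose m \<le> 3 ^ t * ((N - t) choose m)" using Suc by simp
  also have "(N - t) choose m \<le> 3 * ((N - t - 1) choose m)"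
    using Suc.prems by (intro binomial_le_three_mult_pred) auto
  finally show ?case by (simp add: mult.assoc)
qed simp

lemma power_div_add_two_le_one_third:
  assumes "0 < n"
  shows "(real n / (real n + 2)) ^ n \<le> 1 / 3"
proof -
  have "0 \<le> 2 / real n" by simp
  then have "1 + real n * (2 / real n) \<le> (1 + 2 / real n) ^ n"
    by (intro Bernoulli_inequality) linarith
  then have "3 \<le> (1 + 2 / real n) ^ n" using assms by simp
  moreover have "real n / (real n + 2) = 1 / (1 + 2 / real n)" using assms by (simp add: field_simps)
  ultimately show ?thesis by (simp add: power_one_over divide_le_eq)
qed

lemma three_mult_two_pow_less_nine_pow: "0 < d \<Longrightarrow> 3 * 2 ^ d < (9::real) ^ d"
proof (induction d)
  case (Suc d)
  show ?case
  proof (cases "d = 0")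
    case False
    then have "3 * 2 ^ d < (9::real) ^ d" using Suc.IH by simp
    moreover have "(0::real) < 2 ^ d" by simp
    ultimately show ?thesis by (simp only: power_Suc)
  qed simp
qed simp

lemma measure_far_hull_less:
  fixes \<mu> :: "'d::euclidean_space measure" and I :: "'i::countable set"
  assumes \<mu>: "prob_space \<mu>" "sets \<mu> = sets borel"
    and halfspace: "\<And>u. norm u = 1 \<Longrightarrow> measure \<mu> {y. r < u \<bullet> y} \<le> real n / (real n + 2)"
    and "0 < r" "0 < n" "finite I" "6 * DIM('d) * n \<le> card I"
  shows "measure (Pi\<^sub>M I (\<lambda>_. \<mu>)) {x \<in> space (Pi\<^sub>M I (\<lambda>_. \<mu>)). r < hull_dist I x} < 1 / 2 ^ DIM('d)"
proof -
  define d where "d = DIM('d)"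
  define k where "k = d * n"
  define m where "m = 3 * k"
  define c where "c = real n / (real n + 2)"
  define p where "p = measure (Pi\<^sub>M I (\<lambda>_. \<mu>)) {x \<in> space (Pi\<^sub>M I (\<lambda>_. \<mu>)). r < hull_dist I x}"
  define B where "B = (card I - (d + 1)) choose m"
  have "0 < d" by (simp add: d_def)
  then have "d \<le> k" "1 \<le> k" using assms(5) by (simp_all add: k_def Suc_le_eq)
  moreover have "6 * k \<le> card I" using assms(7) by (simp add: k_def d_def mult.assoc)
  ultimately have N: "m < card I" "m \<le> card I - (d + 1)" "3 * m + 2 * (d + 1) \<le> 2 * card I + 2"
      "d + 1 \<le> card I"
    by (simp_all add: m_def)
  have "0 < B" using N(2) by (simp add: B_def)
  have "real B * p \<le> real (card I choose m) * c ^ m"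
    using binomial_mult_measure_far_hull_le[OF \<mu> halfspace assms(4,6) N(1)]
    by (simp add: B_def p_def c_def d_def)
  also have "\<dots> \<le> real (3 ^ (d + 1) * B) * c ^ m"
  proof (rule mult_right_mono)
    show "real (card I choose m) \<le> real (3 ^ (d + 1) * B)"
      unfolding of_nat_le_iff B_def by (rule binomial_le_three_pow_mult[OF N(3,4)])
  qed (simp add: c_def)
  finally have "p \<le> 3 ^ (d + 1) * c ^ m"
    using \<open>0 < B\<close> by (simp add: mult.assoc)
  also have "c ^ m = (c ^ n) ^ (3 * d)"
    by (simp add: m_def k_def power_mult[symmetric] mult_ac)
  also have "\<dots> \<le> (1 / 3) ^ (3 * d)"
    using power_div_add_two_le_one_third[OF assms(5)] by (intro power_mono) (simp_all add: c_def)
  also have "3 ^ (d + 1) * (1 / 3) ^ (3 * d) = 3 / (9::real) ^ d"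
  proof -
    have "(27::real) ^ d = 3 ^ d * 9 ^ d" by (simp flip: power_mult_distrib)
    then show ?thesis by (simp add: power_mult power_one_over)
  qed
  also have "\<dots> < 1 / 2 ^ d"
    using three_mult_two_pow_less_nine_pow[OF \<open>0 < d\<close>] by (simp add: field_simps)
  finally show ?thesis by (simp add: p_def d_def)
qed

lemma (in prob_space) prob_hull_dist_le_iid:
  fixes Xs :: "'i::countable \<Rightarrow> 'a \<Rightarrow> 'd::euclidean_space"
  assumes indep: "indep_vars (\<lambda>_. borel) Xs I"
    and distr: "\<And>i. i \<in> I \<Longrightarrow> distr M borel (Xs i) = \<mu>"
    and "finite I" "I \<noteq> {}"
  shows "prob {\<omega> \<in> space M. hull_dist I (\<lambda>i. Xs i \<omega>) \<le> r}
    = 1 - measure (Pi\<^sub>M I (\<lambda>_. \<mu>)) {x \<in> space (Pi\<^sub>M I (\<lambda>_. \<mu>)). r < hull_dist I x}"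
proof -
  let ?B = "Pi\<^sub>M I (\<lambda>_. borel :: 'd measure)"
  define Y where "Y = (\<lambda>\<omega>. \<lambda>i\<in>I. Xs i \<omega>)"
  have rv: "random_variable borel (Xs i)" if "i \<in> I" for i
    using indep that by (auto simp: indep_vars_def)
  then have Y: "Y \<in> measurable M ?B"
    unfolding Y_def by (intro measurable_restrict) auto
  have "distr M ?B Y = Pi\<^sub>M I (\<lambda>i. distr M borel (Xs i))"
    using indep_vars_iff_distr_eq_PiM'[where M' = "\<lambda>_. borel" and X = Xs, OF \<open>I \<noteq> {}\<close> rv] indep
    by (simp add: Y_def)
  also have "\<dots> = Pi\<^sub>M I (\<lambda>_. \<mu>)"
    using distr by (intro PiM_cong) auto
  finally have distr_Y: "distr M ?B Y = Pi\<^sub>M I (\<lambda>_. \<mu>)" .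
  let ?D = "distr M ?B Y"
  interpret D: prob_space ?D using Y by (rule prob_space_distr)
  have [measurable]: "hull_dist I \<in> borel_measurable ?B"
    using measurable_hull_dist[OF \<open>finite I\<close>] .
  define G where "G = {x \<in> space ?B. hull_dist I x \<le> r}"
  have G: "G \<in> sets ?B" unfolding G_def by measurable
  have "hull_dist I (Y \<omega>) = hull_dist I (\<lambda>i. Xs i \<omega>)" for \<omega>
    by (rule hull_dist_cong) (simp add: Y_def)
  then have "{\<omega> \<in> space M. hull_dist I (\<lambda>i. Xs i \<omega>) \<le> r} = Y -` G \<inter> space M"
    using measurable_space[OF Y] by (auto simp: G_def)
  then have "prob {\<omega> \<in> space M. hull_dist I (\<lambda>i. Xs i \<omega>) \<le> r} = measure ?D G"
    using measure_distr[OF Y G] by simp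
  also have "G = space ?D - {x \<in> space ?D. r < hull_dist I x}"
    by (auto simp: G_def)
  also have "measure ?D \<dots> = 1 - measure ?D {x \<in> space ?D. r < hull_dist I x}"
    by (rule D.prob_compl) measurable
  finally show ?thesis unfolding distr_Y .
qed

theorem theorem4:
  fixes P :: "'a measure"
    and X :: "'a \<Rightarrow> 'd::euclidean_space"
    and Xs :: "nat \<Rightarrow> 'a \<Rightarrow> 'd"
    and M :: real and n N :: nat
  assumes "prob_space P"
    and "X \<in> borel_measurable P"
    and "integrable P X"
    and "integral\<^sup>L P X = 0"
    and "M > 0"
    and "AE \<omega> in P. norm (X \<omega>) \<le> M"
    and "n > 0" and "N > 0"
    and "N \<ge> 6 * DIM('d) * n"
    and "prob_space.indep_vars P (\<lambda>_. borel) Xs {..<N}"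
    and "\<forall>i<N. distr P borel (Xs i) = distr P borel X"
  shows "measure P {\<omega> \<in> space P.
            infdist 0 (convex hull ((\<lambda>i. Xs i \<omega>) ` {..<N})) \<le> 2 * M / real n}
         > 1 - 1 / 2 ^ DIM('d)"
proof -
  interpret prob_space P by fact
  define \<mu> where "\<mu> = distr P borel X"
  define r where "r = 2 * M / real n"
  have \<mu>: "prob_space \<mu>" "sets \<mu> = sets borel"
    using assms(2) by (auto simp: \<mu>_def intro: prob_space_distr)
  have "0 < r" using assms(5,7) by (simp add: r_def)
  have "M + r = M * ((real n + 2) / real n)"
    using assms(7) by (simp add: r_def field_simps)
  then have "M / (M + r) = real n / (real n + 2)"
    using assms(5) by simp
  then have halfspace: "measure \<mu> {y. r < u \<bullet> y} \<le> real n / (real n + 2)" if "norm u = 1" for u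
    using prob_halfspace_le[OF assms(2-4,6) _ \<open>0 < r\<close> that] assms(5) by (simp add: \<mu>_def)
  have "measure (Pi\<^sub>M {..<N} (\<lambda>_. \<mu>)) {x \<in> space (Pi\<^sub>M {..<N} (\<lambda>_. \<mu>)). r < hull_dist {..<N} x}
      < 1 / 2 ^ DIM('d)"
    using measure_far_hull_less[OF \<mu> halfspace \<open>0 < r\<close> assms(7), where I = "{..<N}"] assms(9)
    by simp
  moreover have "prob {\<omega> \<in> space P. hull_dist {..<N} (\<lambda>i. Xs i \<omega>) \<le> r}
      = 1 - measure (Pi\<^sub>M {..<N} (\<lambda>_. \<mu>)) {x \<in> space (Pi\<^sub>M {..<N} (\<lambda>_. \<mu>)). r < hull_dist {..<N} x}"
    using assms(8,10,11) by (intro prob_hull_dist_le_iid) (auto simp: \<mu>_def)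
  ultimately show ?thesis by (simp add: hull_dist_def r_def)
qed

end
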